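(* Assume $b_1<n^*$, $b_2<m^*$ and $n^*=m^*$. Then for every minimum set cover $S^{\min}$ and every maximum set packing $T^{\max}$, $(\sigma^1(S^{\min},b_1),\sigma^2(T^{\max},b_2))$ is a Nash equilibrium of $\Gamma(b_1,b_2)$, and every Nash equilibrium $(\sigma^{1*},\sigma^{2*})$ satisfies $U_1(\sigma^{1*},\sigma^{2*})=\frac{b_1b_2}{n^*}$, $U_2(\sigma^{1*},\sigma^{2*})=b_2(1-\frac{b_1}{n^*})$ and $r(\sigma^{1*},\sigma^{2*})=\frac{b_1}{n^*}$.
   Context: Detection model: finite nonempty sets $\mathcal V$, $\mathcal E$, monitoring sets $\mathcal C_i\subseteq\mathcal E$ ($i\in\mathcal V$) with every $e\in\mathcal E$ in some $\mathcal C_i$; $\mathcal C_S=\bigcup_{i\in S}\mathcal C_i$; $F(S,T)=|\mathcal C_S\cap T|$. Set cover: $S\subseteq\mathcal V$ with $\mathcal C_S=\mathcal E$; $n^*$ = minimum size of a set cover; a minimum set cover is a set cover of size $n^*$. Set packing: $T\subseteq\mathcal E$ with $|\mathcal C_i\cap T|\le1$ for all $i$; $m^*$ = maximum size of a set packing; a maximum set packing is one of size $m^*$. Game $\Gamma(b_1,b_2)$ ($b_1,b_2$ positive integers): $\mathcal A_1=\{S\subseteq\mathcal V:|S|\le b_1\}$, $\mathcal A_2=\{T\subseteq\mathcal E:|T|\le b_2\}$; mixed strategies $\sigma^1\in\Delta(\mathcal A_1)$, $\sigma^2\in\Delta(\mathcal A_2)$ (independent); payoffs $U_1=\mathbb E[F(S,T)]$,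 $U_2=\mathbb E[|T|]-\mathbb E[F(S,T)]$; Nash equilibrium as usual. Expected detection rate $r(\sigma)=\mathbb E[F(S,T)/|T|]$. Cyclic strategies: for $S=\{i_1,\dots,i_n\}$ with $n\ge b_1$, $S^k=\{i_k,\dots,i_{k+b_1-1}\}$ (indices cyclic mod $n$), $k=1,\dots,n$, and $\sigma^1(S,b_1)$ puts probability $1/n$ on each $S^k$; for $T=\{e_1,\dots,e_m\}$ with $m\ge b_2$, $T^l=\{e_l,\dots,e_{l+b_2-1}\}$ cyclically and $\sigma^2(T,b_2)$ puts probability $1/m$ on each $T^l$. *)

theory Defs
  imports "HOL-Probability.Probability"
begin

definition detection_model :: "'v set \<Rightarrow> 'e set \<Rightarrow> ('v \<Rightarrow> 'e set) \<Rightarrow> bool" where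
  "detection_model V E C \<longleftrightarrow> finite V \<and> finite E \<and> V \<noteq> {} \<and> E \<noteq> {} \<and>
     (\<forall>i\<in>V. C i \<subseteq> E) \<and> (\<forall>e\<in>E. \<exists>i\<in>V. e \<in> C i)"

definition covered :: "('v \<Rightarrow> 'e set) \<Rightarrow> 'v set \<Rightarrow> 'e set" where
  "covered C S = (\<Union>i\<in>S. C i)"

definition Fdet :: "('v \<Rightarrow> 'e set) \<Rightarrow> 'v set \<Rightarrow> 'e set \<Rightarrow> nat" where
  "Fdet C S T = card (covered C S \<inter> T)"

definition is_set_cover :: "'v set \<Rightarrow> 'e set \<Rightarrow> ('v \<Rightarrow> 'e set) \<Rightarrow> 'v set \<Rightarrow> bool" where
  "is_set_cover V E C S \<longleftrightarrow> S \<subseteq> V \<and> covered C S = E"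

definition min_cover_size :: "'v set \<Rightarrow> 'e set \<Rightarrow> ('v \<Rightarrow> 'e set) \<Rightarrow> nat" where
  "min_cover_size V E C = Min (card ` {S. is_set_cover V E C S})"

definition is_min_set_cover :: "'v set \<Rightarrow> 'e set \<Rightarrow> ('v \<Rightarrow> 'e set) \<Rightarrow> 'v set \<Rightarrow> bool" where
  "is_min_set_cover V E C S \<longleftrightarrow> is_set_cover V E C S \<and> card S = min_cover_size V E C"

definition is_set_packing :: "'v set \<Rightarrow> 'e set \<Rightarrow> ('v \<Rightarrow> 'e set) \<Rightarrow> 'e set \<Rightarrow> bool" where
  "is_set_packing V E C T \<longleftrightarrow> T \<subseteq> E \<and> (\<forall>i\<in>V. card (C i \<inter> T) \<le> 1)"

definition max_packing_size :: "'v set \<Rightarrow> 'e set \<Rightarrow> ('v \<Rightarrow> 'e set) \<Rightarrow> nat" where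
  "max_packing_size V E C = Max (card ` {T. is_set_packing V E C T})"

definition is_max_set_packing :: "'v set \<Rightarrow> 'e set \<Rightarrow> ('v \<Rightarrow> 'e set) \<Rightarrow> 'e set \<Rightarrow> bool" where
  "is_max_set_packing V E C T \<longleftrightarrow> is_set_packing V E C T \<and> card T = max_packing_size V E C"

definition strat1 :: "'v set \<Rightarrow> nat \<Rightarrow> 'v set set" where
  "strat1 V b1 = {S. S \<subseteq> V \<and> card S \<le> b1}"

definition strat2 :: "'e set \<Rightarrow> nat \<Rightarrow> 'e set set" where
  "strat2 E b2 = {T. T \<subseteq> E \<and> card T \<le> b2}"

definition mixed :: "'a set \<Rightarrow> 'a pmf \<Rightarrow> bool" where
  "mixed A \<sigma> \<longleftrightarrow> set_pmf \<sigma> \<subseteq> A"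

definition U1 :: "('v \<Rightarrow> 'e set) \<Rightarrow> 'v set pmf \<Rightarrow> 'e set pmf \<Rightarrow> real" where
  "U1 C \<sigma>1 \<sigma>2 = measure_pmf.expectation (pair_pmf \<sigma>1 \<sigma>2) (\<lambda>(S, T). real (Fdet C S T))"

definition U2 :: "('v \<Rightarrow> 'e set) \<Rightarrow> 'v set pmf \<Rightarrow> 'e set pmf \<Rightarrow> real" where
  "U2 C \<sigma>1 \<sigma>2 = measure_pmf.expectation (pair_pmf \<sigma>1 \<sigma>2) (\<lambda>(S, T). real (card T))
                  - U1 C \<sigma>1 \<sigma>2"

text \<open>Expected detection rate; for T = {} the ratio is 0/0 = 0 by Isabelle convention.\<close>
definition det_rate :: "('v \<Rightarrow> 'e set) \<Rightarrow> 'v set pmf \<Rightarrow> 'e set pmf \<Rightarrow> real" where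
  "det_rate C \<sigma>1 \<sigma>2 = measure_pmf.expectation (pair_pmf \<sigma>1 \<sigma>2)
       (\<lambda>(S, T). real (Fdet C S T) / real (card T))"

definition nash_eq :: "'v set \<Rightarrow> 'e set \<Rightarrow> ('v \<Rightarrow> 'e set) \<Rightarrow> nat \<Rightarrow> nat
                        \<Rightarrow> 'v set pmf \<Rightarrow> 'e set pmf \<Rightarrow> bool" where
  "nash_eq V E C b1 b2 \<sigma>1 \<sigma>2 \<longleftrightarrow>
     mixed (strat1 V b1) \<sigma>1 \<and> mixed (strat2 E b2) \<sigma>2 \<and>
     (\<forall>\<tau>1. mixed (strat1 V b1) \<tau>1 \<longrightarrow> U1 C \<tau>1 \<sigma>2 \<le> U1 C \<sigma>1 \<sigma>2) \<and>
     (\<forall>\<tau>2. mixed (strat2 E b2) \<tau>2 \<longrightarrow> U2 C \<sigma>1 \<tau>2 \<le> U2 C \<sigma>1 \<sigma>2)"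

text \<open>Cyclic strategy: for an enumeration xs = [x_1,...,x_n] of a set, the window
  X^k = {x_k, ..., x_(k+b-1)} (indices cyclic), each chosen with probability 1/n.
  Indices here are 0-based.\<close>
definition cyc_window :: "'a list \<Rightarrow> nat \<Rightarrow> nat \<Rightarrow> 'a set" where
  "cyc_window xs b k = {xs ! ((k + j) mod length xs) | j. j < b}"

definition cyclic_strategy :: "'a list \<Rightarrow> nat \<Rightarrow> 'a set pmf" where
  "cyclic_strategy xs b = map_pmf (cyc_window xs b) (pmf_of_set {..<length xs})"

end

theory Submission
  imports Defs
begin

text \<open>
  Cyclic play over a set packing \<open>T\<close> of size \<open>m\<close> puts every element of \<open>T\<close> in exactly \<open>b\<^sub>2\<close> of
  the \<open>m\<close> windows; since a monitor sees at most one element of a packing, any \<open>S\<close> with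
  \<open>|S| \<le> b\<^sub>1\<close> then detects at most \<open>b\<^sub>1 b\<^sub>2 / m\<close> in expectation. Dually, cyclic play over a set
  cover of size \<open>n\<close> detects every attacked element with probability at least \<open>b\<^sub>1 / n\<close>. When
  \<open>n = m\<close> the two guarantees meet, so the cyclic pair is an equilibrium with value
  \<open>b\<^sub>1 b\<^sub>2 / n\<close>; in any equilibrium both guarantees are binding, which forces the attacker to
  use its whole budget and fixes all payoffs.
\<close>

lemma expectation_pair_pmf_iterated:
  fixes f :: "'a \<times> 'b \<Rightarrow> real"
  assumes "finite (set_pmf p)" "finite (set_pmf q)"
  shows "measure_pmf.expectation (pair_pmf p q) f =
         measure_pmf.expectation p (\<lambda>a. measure_pmf.expectation q (\<lambda>b. f (a, b)))"
    and "measure_pmf.expectation (pair_pmf p q) f =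
         measure_pmf.expectation q (\<lambda>b. measure_pmf.expectation p (\<lambda>a. f (a, b)))"
proof -
  let ?A = "set_pmf p" and ?B = "set_pmf q"
  have sum: "measure_pmf.expectation M g = (\<Sum>x\<in>set_pmf M. g x * pmf M x)"
    if "finite (set_pmf M)" for M :: "'c pmf" and g
    using that by (intro integral_measure_pmf_real) auto
  have "measure_pmf.expectation (pair_pmf p q) f = (\<Sum>x\<in>?A \<times> ?B. f x * pmf (pair_pmf p q) x)"
    using assms by (simp add: sum)
  also have "\<dots> = (\<Sum>a\<in>?A. \<Sum>b\<in>?B. f (a, b) * (pmf p a * pmf q b))"
    unfolding sum.cartesian_product by (rule sum.cong) (auto simp: pmf_pair)
  finally have pair: "measure_pmf.expectation (pair_pmf p q) f
      = (\<Sum>a\<in>?A. \<Sum>b\<in>?B. f (a, b) * (pmf p a * pmf q b))" .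
  show "measure_pmf.expectation (pair_pmf p q) f =
         measure_pmf.expectation p (\<lambda>a. measure_pmf.expectation q (\<lambda>b. f (a, b)))"
    unfolding pair using assms by (simp add: sum sum_distrib_left sum_distrib_right mult_ac)
  show "measure_pmf.expectation (pair_pmf p q) f =
         measure_pmf.expectation q (\<lambda>b. measure_pmf.expectation p (\<lambda>a. f (a, b)))"
    unfolding pair using assms by (subst sum.swap) (simp add: sum sum_distrib_left sum_distrib_right mult_ac)
qed

lemma expectation_mono_pmf_finite:
  fixes f g :: "'a \<Rightarrow> real"
  assumes "finite (set_pmf M)" "\<And>x. x \<in> set_pmf M \<Longrightarrow> f x \<le> g x"
  shows "measure_pmf.expectation M f \<le> measure_pmf.expectation M g"
  using assms by (intro integral_mono_AE) (auto simp: AE_measure_pmf_iff integrable_measure_pmf_finite)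

lemma expectation_eq_upper_bound_imp_eq:
  fixes f :: "'a \<Rightarrow> real"
  assumes "finite (set_pmf M)" "\<And>x. x \<in> set_pmf M \<Longrightarrow> f x \<le> c"
    and "measure_pmf.expectation M f = c" "x \<in> set_pmf M"
  shows "f x = c"
proof -
  have "measure_pmf.expectation M (\<lambda>x. c - f x) = 0"
    using assms(1,3) by (simp add: integrable_measure_pmf_finite)
  then have "AE y in M. c - f y = 0"
    using assms(1,2) by (subst (asm) integral_nonneg_eq_0_iff_AE)
      (auto simp: AE_measure_pmf_iff integrable_measure_pmf_finite)
  then show ?thesis
    using assms(4) by (simp add: AE_measure_pmf_iff)
qed

lemma sum_card_eq_sum_card_containing:
  assumes "finite S" "finite K" "\<And>k. k \<in> K \<Longrightarrow> P k \<subseteq> S"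
  shows "(\<Sum>k\<in>K. card (P k)) = (\<Sum>e\<in>S. card {k\<in>K. e \<in> P k})"
proof -
  have "card (P k) = (\<Sum>e\<in>S. if e \<in> P k then 1 else 0)" if "k \<in> K" for k
    using assms(1) assms(3)[OF that] by (simp add: sum.If_cases Int_absorb1)
  then have "(\<Sum>k\<in>K. card (P k)) = (\<Sum>k\<in>K. \<Sum>e\<in>S. if e \<in> P k then 1 else 0)"
    by simp
  also have "\<dots> = (\<Sum>e\<in>S. \<Sum>k\<in>K. if e \<in> P k then 1 else 0)"
    by (rule sum.swap)
  also have "\<dots> = (\<Sum>e\<in>S. card {k\<in>K. e \<in> P k})"
    using assms(2) by (simp add: sum.inter_filter[symmetric])
  finally show ?thesis .
qed

lemma mod_add_eq_iff_eq_mod_diff: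
  fixes k j n p :: nat
  assumes "k < n" "j < n" "p < n"
  shows "(k + j) mod n = p \<longleftrightarrow> k = (p + (n - j)) mod n"
proof
  assume "(k + j) mod n = p"
  then have "(p + (n - j)) mod n = ((k + j) mod n + (n - j)) mod n"
    by simp
  also have "\<dots> = (k + j + (n - j)) mod n"
    by (rule mod_add_left_eq)
  finally show "k = (p + (n - j)) mod n"
    using assms by simp
next
  assume "k = (p + (n - j)) mod n"
  then have "(k + j) mod n = (p + (n - j) + j) mod n"
    by (simp add: mod_add_left_eq)
  then show "(k + j) mod n = p"
    using assms by simp
qed

lemma cyc_window_eq_image: "cyc_window xs b k = (\<lambda>j. xs ! ((k + j) mod length xs)) ` {..<b}"
  unfolding cyc_window_def by auto

lemma cyc_window_subset: "xs \<noteq> [] \<Longrightarrow> cyc_window xs b k \<subseteq> set xs"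
  unfolding cyc_window_def by auto

lemma card_cyc_window_le: "card (cyc_window xs b k) \<le> b"
  unfolding cyc_window_eq_image by (metis card_image_le card_lessThan finite_lessThan)

lemma card_cyc_windows_containing:
  assumes "distinct xs" "b \<le> length xs" "x \<in> set xs"
  shows "card {k\<in>{..<length xs}. x \<in> cyc_window xs b k} = b"
proof -
  define n where "n = length xs"
  obtain p where p: "p < n" "xs ! p = x"
    using assms(3) unfolding n_def by (metis in_set_conv_nth)
  define start where "start j = (p + (n - j)) mod n" for j
  have hits: "xs ! ((k + j) mod n) = x \<longleftrightarrow> k = start j" if "k < n" "j < n" for k j
  proof -
    have "(k + j) mod n < n"
      using that by simp
    then have "xs ! ((k + j) mod n) = x \<longleftrightarrow> (k + j) mod n = p"
      using p assms(1) unfolding n_def by (metis nth_eq_iff_index_eq)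
    then show ?thesis
      using mod_add_eq_iff_eq_mod_diff[OF that p(1)] unfolding start_def by simp
  qed
  have "x \<in> cyc_window xs b k \<longleftrightarrow> k \<in> start ` {..<b}" if "k < n" for k
  proof -
    have "xs ! ((k + j) mod n) = x \<longleftrightarrow> k = start j" if "j < b" for j
      using hits \<open>k < n\<close> that assms(2) unfolding n_def by simp
    then show ?thesis
      unfolding cyc_window_eq_image n_def by auto
  qed
  then have "{k\<in>{..<n}. x \<in> cyc_window xs b k} = start ` {..<b}"
    using p(1) unfolding start_def by fastforce
  moreover have "inj_on start {..<b}"
  proof (rule inj_on_inverseI)
    fix j assume "j \<in> {..<b}"
    then have j: "j < n"
      using assms(2) unfolding n_def by simp
    have start_lt: "start i < n" for i
      using p(1) unfolding start_def by simp
    have "(start j + j) mod n = p"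
      using mod_add_eq_iff_eq_mod_diff[OF start_lt j p(1)] unfolding start_def by simp
    then show "start (start j) = j"
      using mod_add_eq_iff_eq_mod_diff[OF j start_lt p(1)] unfolding start_def
      by (simp add: add.commute)
  qed
  ultimately show ?thesis
    using card_image unfolding n_def by fastforce
qed

lemma sum_card_Int_cyc_window:
  assumes "distinct xs" "b \<le> length xs"
  shows "(\<Sum>k<length xs. card (A \<inter> cyc_window xs b k)) = b * card (A \<inter> set xs)"
proof (cases "xs = []")
  case False
  have "(\<Sum>k<length xs. card (A \<inter> cyc_window xs b k))
      = (\<Sum>e\<in>A \<inter> set xs. card {k\<in>{..<length xs}. e \<in> A \<inter> cyc_window xs b k})"
    using cyc_window_subset[OF False] by (intro sum_card_eq_sum_card_containing) auto
  also have "\<dots> = (\<Sum>e\<in>A \<inter> set xs. b)"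
    using card_cyc_windows_containing[OF assms] by (intro sum.cong) auto
  finally show ?thesis
    by simp
qed simp

lemma card_le_sum_card_covered_cyc_window:
  assumes "distinct xs" "b \<le> length xs" "finite T" "T \<subseteq> covered C (set xs)"
  shows "b * card T \<le> (\<Sum>k<length xs. card (covered C (cyc_window xs b k) \<inter> T))"
proof -
  have "(\<Sum>e\<in>T. b) \<le> (\<Sum>e\<in>T. card {k\<in>{..<length xs}. e \<in> covered C (cyc_window xs b k) \<inter> T})"
  proof (rule sum_mono)
    fix e assume e: "e \<in> T"
    then obtain i where i: "i \<in> set xs" "e \<in> C i"
      using assms(4) unfolding covered_def by auto
    have "{k\<in>{..<length xs}. i \<in> cyc_window xs b k}
        \<subseteq> {k\<in>{..<length xs}. e \<in> covered C (cyc_window xs b k) \<inter> T}"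
      using i e unfolding covered_def by auto
    then have "card {k\<in>{..<length xs}. i \<in> cyc_window xs b k}
        \<le> card {k\<in>{..<length xs}. e \<in> covered C (cyc_window xs b k) \<inter> T}"
      by (intro card_mono) auto
    then show "b \<le> card {k\<in>{..<length xs}. e \<in> covered C (cyc_window xs b k) \<inter> T}"
      using card_cyc_windows_containing[OF assms(1,2) i(1)] by simp
  qed
  also have "\<dots> = (\<Sum>k<length xs. card (covered C (cyc_window xs b k) \<inter> T))"
    using assms(3) by (intro sum_card_eq_sum_card_containing[symmetric]) auto
  finally show ?thesis
    by (simp add: mult.commute)
qed

lemma set_pmf_cyclic_strategy:
  "xs \<noteq> [] \<Longrightarrow> set_pmf (cyclic_strategy xs b) = cyc_window xs b ` {..<length xs}"
  unfolding cyclic_strategy_def by (subst set_map_pmf, subst set_pmf_of_set) auto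

lemma finite_set_pmf_cyclic_strategy: "xs \<noteq> [] \<Longrightarrow> finite (set_pmf (cyclic_strategy xs b))"
  by (simp add: set_pmf_cyclic_strategy)

lemma expectation_cyclic_strategy:
  fixes g :: "'a set \<Rightarrow> real"
  assumes "xs \<noteq> []"
  shows "measure_pmf.expectation (cyclic_strategy xs b) g
       = (\<Sum>k<length xs. g (cyc_window xs b k)) / length xs"
  unfolding cyclic_strategy_def using assms
  by (subst integral_map_pmf, subst integral_pmf_of_set) auto

lemma expectation_card_cyclic_strategy:
  assumes "distinct xs" "b \<le> length xs" "xs \<noteq> []"
  shows "measure_pmf.expectation (cyclic_strategy xs b) (\<lambda>T. real (card T)) = real b"
proof -
  have "(\<Sum>k<length xs. card (cyc_window xs b k)) = (\<Sum>k<length xs. card (set xs \<inter> cyc_window xs b k))"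
    using cyc_window_subset[OF assms(3)] by (intro sum.cong) (auto simp: Int_absorb1)
  also have "\<dots> = b * length xs"
    using sum_card_Int_cyc_window[OF assms(1,2), of "set xs"] assms(1) by (simp add: distinct_card)
  finally show ?thesis
    using assms(3) by (simp add: expectation_cyclic_strategy flip: of_nat_sum)
qed

lemma cyclic_strategy_mixed:
  assumes "set xs \<subseteq> A" "xs \<noteq> []"
  shows "mixed (strat1 A b) (cyclic_strategy xs b)" "mixed (strat2 A b) (cyclic_strategy xs b)"
  using cyc_window_subset[OF assms(2)] card_cyc_window_le assms(1)
  unfolding mixed_def strat1_def strat2_def set_pmf_cyclic_strategy[OF assms(2)] by blast+

lemma finite_set_pmf_mixed:
  "finite A \<Longrightarrow> mixed A \<sigma> \<Longrightarrow> finite (set_pmf \<sigma>)"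
  unfolding mixed_def using finite_subset by blast

lemma finite_strat1: "finite V \<Longrightarrow> finite (strat1 V b)"
  unfolding strat1_def by (rule finite_subset[of _ "Pow V"]) auto

lemma finite_strat2: "finite E \<Longrightarrow> finite (strat2 E b)"
  unfolding strat2_def by (rule finite_subset[of _ "Pow E"]) auto

lemma card_covered_Int_set_packing_le:
  assumes "is_set_packing V E C T" "S \<subseteq> V" "finite S"
  shows "card (covered C S \<inter> T) \<le> card S"
proof -
  have "card (covered C S \<inter> T) = card (\<Union>i\<in>S. C i \<inter> T)"
    unfolding covered_def by (simp add: Int_UN_distrib2)
  also have "\<dots> \<le> (\<Sum>i\<in>S. card (C i \<inter> T))"
    using assms(3) by (rule card_UN_le)
  also have "\<dots> \<le> (\<Sum>i\<in>S. 1)"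
    using assms(1,2) unfolding is_set_packing_def by (intro sum_mono) auto
  finally show ?thesis
    by simp
qed

lemma U1_cyclic_packing_le:
  assumes "finite V" "distinct ys" "is_set_packing V E C (set ys)"
    and "b2 \<le> length ys" "ys \<noteq> []" "mixed (strat1 V b1) \<sigma>1"
  shows "U1 C \<sigma>1 (cyclic_strategy ys b2) \<le> real b1 * real b2 / real (length ys)"
proof -
  have fin: "finite (set_pmf \<sigma>1)"
    using finite_set_pmf_mixed[OF finite_strat1[OF assms(1)] assms(6)] .
  have "U1 C \<sigma>1 (cyclic_strategy ys b2) = measure_pmf.expectation \<sigma>1
      (\<lambda>S. measure_pmf.expectation (cyclic_strategy ys b2) (\<lambda>T. real (Fdet C S T)))"
    unfolding U1_def
    by (simp add: expectation_pair_pmf_iterated(1)[OF fin finite_set_pmf_cyclic_strategy[OF assms(5)]])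
  also have "\<dots> \<le> measure_pmf.expectation \<sigma>1 (\<lambda>S. real b1 * real b2 / real (length ys))"
  proof (rule expectation_mono_pmf_finite[OF fin])
    fix S assume "S \<in> set_pmf \<sigma>1"
    then have S: "S \<subseteq> V" "card S \<le> b1"
      using assms(6) unfolding mixed_def strat1_def by auto
    have "card (covered C S \<inter> set ys) \<le> b1"
      using card_covered_Int_set_packing_le[OF assms(3) S(1)] S assms(1) finite_subset by fastforce
    then have "(\<Sum>k<length ys. Fdet C S (cyc_window ys b2 k)) \<le> b1 * b2"
      using sum_card_Int_cyc_window[OF assms(2,4), of "covered C S"] unfolding Fdet_def by simp
    then have "(\<Sum>k<length ys. real (Fdet C S (cyc_window ys b2 k))) \<le> real b1 * real b2"
      by (metis of_nat_le_iff of_nat_mult of_nat_sum)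
    then show "measure_pmf.expectation (cyclic_strategy ys b2) (\<lambda>T. real (Fdet C S T))
        \<le> real b1 * real b2 / real (length ys)"
      using assms(5) by (simp add: expectation_cyclic_strategy divide_right_mono)
  qed
  finally show ?thesis
    by simp
qed

lemma U1_cyclic_cover_ge:
  assumes "finite E" "distinct xs" "is_set_cover V E C (set xs)"
    and "b1 \<le> length xs" "xs \<noteq> []" "mixed (strat2 E b2) \<sigma>2"
  shows "real b1 / real (length xs) * measure_pmf.expectation \<sigma>2 (\<lambda>T. real (card T))
           \<le> U1 C (cyclic_strategy xs b1) \<sigma>2"
proof -
  have fin: "finite (set_pmf \<sigma>2)"
    using finite_set_pmf_mixed[OF finite_strat2[OF assms(1)] assms(6)] .
  have "measure_pmf.expectation \<sigma>2 (\<lambda>T. real b1 / real (length xs) * real (card T))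
      \<le> measure_pmf.expectation \<sigma>2
            (\<lambda>T. measure_pmf.expectation (cyclic_strategy xs b1) (\<lambda>S. real (Fdet C S T)))"
  proof (rule expectation_mono_pmf_finite[OF fin])
    fix T assume "T \<in> set_pmf \<sigma>2"
    then have T: "T \<subseteq> E"
      using assms(6) unfolding mixed_def strat2_def by auto
    then have "b1 * card T \<le> (\<Sum>k<length xs. Fdet C (cyc_window xs b1 k) T)"
      using card_le_sum_card_covered_cyc_window[OF assms(2,4)] assms(1,3) finite_subset
      unfolding Fdet_def is_set_cover_def by blast
    then have "real b1 * real (card T) \<le> (\<Sum>k<length xs. real (Fdet C (cyc_window xs b1 k) T))"
      by (metis of_nat_le_iff of_nat_mult of_nat_sum)
    then show "real b1 / real (length xs) * real (card T)
        \<le> measure_pmf.expectation (cyclic_strategy xs b1) (\<lambda>S. real (Fdet C S T))"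
      using assms(5) by (simp add: expectation_cyclic_strategy divide_right_mono)
  qed
  then show ?thesis
    unfolding U1_def
    by (simp add: expectation_pair_pmf_iterated(2)[OF finite_set_pmf_cyclic_strategy[OF assms(5)] fin])
qed

lemma U2_eq_expected_card_minus_U1:
  "U2 C \<sigma>1 \<sigma>2 = measure_pmf.expectation \<sigma>2 (\<lambda>T. real (card T)) - U1 C \<sigma>1 \<sigma>2"
  unfolding U2_def split_def
  using expectation_pair_pmf_snd[where f = "\<lambda>T. real (card T)" and p = \<sigma>1 and q = \<sigma>2] by simp

lemma expected_card_le_budget:
  assumes "finite E" "mixed (strat2 E b2) \<sigma>2"
  shows "measure_pmf.expectation \<sigma>2 (\<lambda>T. real (card T)) \<le> real b2"
proof -
  have "measure_pmf.expectation \<sigma>2 (\<lambda>T. real (card T)) \<le> measure_pmf.expectation \<sigma>2 (\<lambda>_. real b2)"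
    using finite_set_pmf_mixed[OF finite_strat2[OF assms(1)] assms(2)] assms(2)
    by (intro expectation_mono_pmf_finite) (auto simp: mixed_def strat2_def)
  then show ?thesis
    by simp
qed

lemma det_rate_eq_U1_div_budget:
  assumes "finite E" "mixed (strat2 E b2) \<sigma>2"
    and "measure_pmf.expectation \<sigma>2 (\<lambda>T. real (card T)) = real b2"
  shows "det_rate C \<sigma>1 \<sigma>2 = U1 C \<sigma>1 \<sigma>2 / real b2"
proof -
  have fin: "finite (set_pmf \<sigma>2)"
    using finite_set_pmf_mixed[OF finite_strat2[OF assms(1)] assms(2)] .
  have "real (card T) = real b2" if "T \<in> set_pmf \<sigma>2" for T
    using assms(2) by (intro expectation_eq_upper_bound_imp_eq[OF fin _ assms(3) that])
      (auto simp: mixed_def strat2_def)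
  then have "det_rate C \<sigma>1 \<sigma>2 = measure_pmf.expectation (pair_pmf \<sigma>1 \<sigma>2)
      (\<lambda>(S, T). real (Fdet C S T) / real b2)"
    unfolding det_rate_def by (intro integral_cong_AE) (auto simp: AE_measure_pmf_iff)
  also have "\<dots> = U1 C \<sigma>1 \<sigma>2 / real b2"
    unfolding U1_def by (simp add: split_def)
  finally show ?thesis .
qed

context
  fixes V :: "'v set" and E :: "'e set" and C :: "'v \<Rightarrow> 'e set" and xs :: "'v list" and ys :: "'e list"
  assumes finite: "finite V" "finite E"
    and cover: "distinct xs" "is_set_cover V E C (set xs)" "xs \<noteq> []"
    and packing: "distinct ys" "is_set_packing V E C (set ys)"
    and same_size: "length ys = length xs"
begin

lemma cyclic_strategies_mixed:
  "mixed (strat1 V b1) (cyclic_strategy xs b1)" "mixed (strat2 E b2) (cyclic_strategy ys b2)"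
proof -
  have "ys \<noteq> []"
    using cover(3) same_size by auto
  then show "mixed (strat1 V b1) (cyclic_strategy xs b1)" "mixed (strat2 E b2) (cyclic_strategy ys b2)"
    using cyclic_strategy_mixed cover(2,3) packing(2)
    unfolding is_set_cover_def is_set_packing_def by auto
qed

lemma cyclic_packing_guarantee:
  assumes "b2 \<le> length xs" "mixed (strat1 V b1) \<tau>1"
  shows "U1 C \<tau>1 (cyclic_strategy ys b2) \<le> real b1 / real (length xs) * real b2"
proof -
  have "ys \<noteq> []"
    using cover(3) same_size by auto
  then show ?thesis
    using U1_cyclic_packing_le[OF finite(1) packing _ _ assms(2)] assms(1) same_size by simp
qed

lemma cyclic_cover_guarantee:
  assumes "b1 \<le> length xs" "mixed (strat2 E b2) \<tau>2"
  shows "real b1 / real (length xs) * measure_pmf.expectation \<tau>2 (\<lambda>T. real (card T))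
           \<le> U1 C (cyclic_strategy xs b1) \<tau>2"
  using U1_cyclic_cover_ge[OF finite(2) cover(1,2) assms(1) cover(3) assms(2)] .

lemma expected_card_cyclic_packing:
  assumes "b2 \<le> length xs"
  shows "measure_pmf.expectation (cyclic_strategy ys b2) (\<lambda>T. real (card T)) = real b2"
proof -
  have "ys \<noteq> []"
    using cover(3) same_size by auto
  then show ?thesis
    using expectation_card_cyclic_strategy[OF packing(1)] assms same_size by simp
qed

lemma cyclic_strategies_nash_eq:
  assumes b1: "b1 \<le> length xs" and b2: "b2 \<le> length xs"
  defines "\<sigma>1 \<equiv> cyclic_strategy xs b1" and "\<sigma>2 \<equiv> cyclic_strategy ys b2"
  shows "U1 C \<sigma>1 \<sigma>2 = real b1 * real b2 / real (length xs)"
    and "nash_eq V E C b1 b2 \<sigma>1 \<sigma>2"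
proof -
  define a where "a = real b1 / real (length xs)"
  have U1_value: "U1 C \<sigma>1 \<sigma>2 = a * real b2"
    using cyclic_packing_guarantee[OF b2 cyclic_strategies_mixed(1)[of b1]]
      cyclic_cover_guarantee[OF b1 cyclic_strategies_mixed(2)[of b2]]
      expected_card_cyclic_packing[OF b2]
    unfolding \<sigma>1_def \<sigma>2_def a_def by simp
  then show "U1 C \<sigma>1 \<sigma>2 = real b1 * real b2 / real (length xs)"
    unfolding a_def by simp
  have "U2 C \<sigma>1 \<tau>2 \<le> U2 C \<sigma>1 \<sigma>2" if "mixed (strat2 E b2) \<tau>2" for \<tau>2
  proof -
    define Ec where "Ec = measure_pmf.expectation \<tau>2 (\<lambda>T. real (card T))"
    have "U2 C \<sigma>1 \<tau>2 \<le> (1 - a) * Ec"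
      using cyclic_cover_guarantee[OF b1 that]
      unfolding U2_eq_expected_card_minus_U1 Ec_def \<sigma>1_def a_def by (simp add: algebra_simps)
    also have "\<dots> \<le> (1 - a) * real b2"
      using expected_card_le_budget[OF finite(2) that] b1
      unfolding Ec_def a_def by (intro mult_left_mono) (auto simp: divide_le_eq_1)
    also have "\<dots> = U2 C \<sigma>1 \<sigma>2"
      using expected_card_cyclic_packing[OF b2, folded \<sigma>2_def]
      unfolding U2_eq_expected_card_minus_U1 U1_value by (simp add: algebra_simps)
    finally show ?thesis .
  qed
  then show "nash_eq V E C b1 b2 \<sigma>1 \<sigma>2"
    using cyclic_strategies_mixed cyclic_packing_guarantee[OF b2] U1_value
    unfolding nash_eq_def \<sigma>1_def \<sigma>2_def a_def by auto
qed

lemma nash_eq_value: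
  assumes b1: "b1 < length xs" and b2: "b2 \<le> length xs" and eq: "nash_eq V E C b1 b2 \<sigma>1 \<sigma>2"
  shows "measure_pmf.expectation \<sigma>2 (\<lambda>T. real (card T)) = real b2"
    and "U1 C \<sigma>1 \<sigma>2 = real b1 * real b2 / real (length xs)"
proof -
  define a where "a = real b1 / real (length xs)"
  define Ec where "Ec = measure_pmf.expectation \<sigma>2 (\<lambda>T. real (card T))"
  let ?\<sigma>1 = "cyclic_strategy xs b1" and ?\<sigma>2 = "cyclic_strategy ys b2"
  have m1: "mixed (strat1 V b1) \<sigma>1" and m2: "mixed (strat2 E b2) \<sigma>2"
    and best1: "U1 C ?\<sigma>1 \<sigma>2 \<le> U1 C \<sigma>1 \<sigma>2" and best2: "U2 C \<sigma>1 ?\<sigma>2 \<le> U2 C \<sigma>1 \<sigma>2"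
    using eq cyclic_strategies_mixed unfolding nash_eq_def by auto
  have cover: "a * Ec \<le> U1 C ?\<sigma>1 \<sigma>2"
    using cyclic_cover_guarantee[OF less_imp_le[OF b1] m2] unfolding a_def Ec_def .
  have packing: "U1 C \<sigma>1 ?\<sigma>2 \<le> a * real b2"
    using cyclic_packing_guarantee[OF b2 m1] unfolding a_def .
  have U2: "U2 C \<sigma>1 \<sigma>2 = Ec - U1 C \<sigma>1 \<sigma>2" "U2 C \<sigma>1 ?\<sigma>2 = real b2 - U1 C \<sigma>1 ?\<sigma>2"
    using expected_card_cyclic_packing[OF b2] unfolding U2_eq_expected_card_minus_U1 Ec_def by simp_all
  have "(1 - a) * real b2 \<le> (1 - a) * Ec"
    using best1 best2 cover packing U2 by (simp add: algebra_simps)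
  moreover have "a < 1"
    using b1 unfolding a_def by (simp add: divide_less_eq)
  ultimately have "real b2 \<le> Ec"
    by simp
  then show Ec: "Ec = real b2"
    using expected_card_le_budget[OF finite(2) m2] unfolding Ec_def by simp
  show "U1 C \<sigma>1 \<sigma>2 = real b1 * real b2 / real (length xs)"
    using best1 best2 cover packing U2 Ec unfolding a_def by simp
qed

lemma nash_eq_payoffs:
  assumes "b1 < length xs" "b2 \<le> length xs" "0 < b2" "nash_eq V E C b1 b2 \<sigma>1 \<sigma>2"
  shows "U1 C \<sigma>1 \<sigma>2 = real b1 * real b2 / real (length xs)"
    and "U2 C \<sigma>1 \<sigma>2 = real b2 * (1 - real b1 / real (length xs))"
    and "det_rate C \<sigma>1 \<sigma>2 = real b1 / real (length xs)"
proof -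
  note Ec = nash_eq_value(1)[OF assms(1,2,4)] and U1 = nash_eq_value(2)[OF assms(1,2,4)]
  show "U1 C \<sigma>1 \<sigma>2 = real b1 * real b2 / real (length xs)"
    using U1 .
  show "U2 C \<sigma>1 \<sigma>2 = real b2 * (1 - real b1 / real (length xs))"
    using Ec U1 unfolding U2_eq_expected_card_minus_U1 by (simp add: algebra_simps)
  have "det_rate C \<sigma>1 \<sigma>2 = U1 C \<sigma>1 \<sigma>2 / real b2"
    using assms(4) Ec unfolding nash_eq_def by (intro det_rate_eq_U1_div_budget[OF finite(2)]) auto
  then show "det_rate C \<sigma>1 \<sigma>2 = real b1 / real (length xs)"
    using U1 assms(3) by simp
qed

end

lemma ex_distinct_min_set_cover:
  assumes "detection_model V E C"
  shows "\<exists>xs. distinct xs \<and> is_min_set_cover V E C (set xs)"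
proof -
  let ?F = "{S. is_set_cover V E C S}"
  have fin: "finite V"
    using assms unfolding detection_model_def by simp
  have "finite ?F"
    by (rule finite_subset[of _ "Pow V"]) (use fin in \<open>auto simp: is_set_cover_def\<close>)
  moreover have "V \<in> ?F"
    using assms unfolding detection_model_def is_set_cover_def covered_def by blast
  ultimately have "min_cover_size V E C \<in> card ` ?F"
    unfolding min_cover_size_def by (intro Min_in) auto
  then obtain S where S: "is_set_cover V E C S" "card S = min_cover_size V E C"
    by auto
  moreover have "finite S"
    using S(1) fin finite_subset unfolding is_set_cover_def by blast
  then obtain xs where "set xs = S" "distinct xs"
    using finite_distinct_list by blast
  ultimately show ?thesis
    unfolding is_min_set_cover_def by blast
qed

lemma ex_distinct_max_set_packing:
  assumes "detection_model V E C"
  shows "\<exists>ys. distinct ys \<and> is_max_set_packing V E C (set ys)"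
proof -
  let ?F = "{T. is_set_packing V E C T}"
  have fin: "finite E"
    using assms unfolding detection_model_def by simp
  have "finite ?F"
    by (rule finite_subset[of _ "Pow E"]) (use fin in \<open>auto simp: is_set_packing_def\<close>)
  moreover have "{} \<in> ?F"
    unfolding is_set_packing_def by simp
  ultimately have "max_packing_size V E C \<in> card ` ?F"
    unfolding max_packing_size_def by (intro Max_in) auto
  then obtain T where T: "is_set_packing V E C T" "card T = max_packing_size V E C"
    by auto
  moreover have "finite T"
    using T(1) fin finite_subset unfolding is_set_packing_def by blast
  then obtain ys where "set ys = T" "distinct ys"
    using finite_distinct_list by blast
  ultimately show ?thesis
    unfolding is_max_set_packing_def by blast
qed

theorem mainTheorem10:
  fixes V :: "'v set" and E :: "'e set" and C :: "'v \<Rightarrow> 'e set" and b1 b2 :: nat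
  assumes "detection_model V E C"
    and "0 < b1" and "0 < b2"
    and "b1 < min_cover_size V E C"
    and "b2 < max_packing_size V E C"
    and "min_cover_size V E C = max_packing_size V E C"
  shows "(\<forall>xs ys. distinct xs \<and> is_min_set_cover V E C (set xs) \<and>
                 distinct ys \<and> is_max_set_packing V E C (set ys) \<longrightarrow>
             nash_eq V E C b1 b2 (cyclic_strategy xs b1) (cyclic_strategy ys b2))
       \<and> (\<forall>\<sigma>1 \<sigma>2. nash_eq V E C b1 b2 \<sigma>1 \<sigma>2 \<longrightarrow>
             U1 C \<sigma>1 \<sigma>2 = real b1 * real b2 / real (min_cover_size V E C) \<and>
             U2 C \<sigma>1 \<sigma>2 = real b2 * (1 - real b1 / real (min_cover_size V E C)) \<and>
             det_rate C \<sigma>1 \<sigma>2 = real b1 / real (min_cover_size V E C))"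
proof -
  define n where "n = min_cover_size V E C"
  have fin: "finite V" "finite E"
    using assms(1) unfolding detection_model_def by auto
  have optimal: "is_set_cover V E C (set xs) \<and> xs \<noteq> [] \<and> is_set_packing V E C (set ys)
      \<and> length ys = length xs \<and> length xs = n \<and> b1 < n \<and> b2 < n"
    if "distinct xs" "is_min_set_cover V E C (set xs)" "distinct ys" "is_max_set_packing V E C (set ys)"
    for xs ys
    using that assms(4-6)
    unfolding is_min_set_cover_def is_max_set_packing_def n_def by (auto simp flip: distinct_card)
  have "nash_eq V E C b1 b2 (cyclic_strategy xs b1) (cyclic_strategy ys b2)"
    if "distinct xs" "is_min_set_cover V E C (set xs)" "distinct ys" "is_max_set_packing V E C (set ys)"
    for xs ys
    using optimal[OF that] that cyclic_strategies_nash_eq(2)[OF fin] by simp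
  moreover have "U1 C \<sigma>1 \<sigma>2 = real b1 * real b2 / real n \<and>
      U2 C \<sigma>1 \<sigma>2 = real b2 * (1 - real b1 / real n) \<and> det_rate C \<sigma>1 \<sigma>2 = real b1 / real n"
    if eq: "nash_eq V E C b1 b2 \<sigma>1 \<sigma>2" for \<sigma>1 \<sigma>2
  proof -
    obtain xs ys where xs: "distinct xs" "is_min_set_cover V E C (set xs)"
      and ys: "distinct ys" "is_max_set_packing V E C (set ys)"
      using ex_distinct_min_set_cover[OF assms(1)] ex_distinct_max_set_packing[OF assms(1)] by blast
    show ?thesis
      using optimal[OF xs ys] nash_eq_payoffs[OF fin xs(1) _ _ ys(1) _ _ _ _ assms(3) eq] by simp
  qed
  ultimately show ?thesis
    unfolding n_def by blast
qed

end
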